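(* Let $L\ge 2$, let $f\in C^2(\mathbb{R}^n,\mathbb{R})$ with $\nabla_x f(0)\neq 0$, and define $F(w_1,\dots,w_L):=f\left(\prod_{i=1}^L w_i\right)$ for $w_1,\dots,w_L\in\mathbb{R}^n$ (entrywise product). Let $$S:=\{(w_1,\dots,w_L): \text{there exist } i\neq j \text{ in } [L] \text{ with } w_i=w_j=0,\ \text{and } w_k \text{ has all entries nonzero for every } k\notin\{i,j\}\}.$$ Then every point of $S$ is a saddle point of $F$.
   Context: A saddle point of a function $F\in C^2$ is a point where $\nabla F=0$ and the Hessian $\nabla^2 F$ is not positive semidefinite. The map $x=g(w)=\prod_{i=1}^L w_i$ is the deep diagonal reparameterization. *)

theory Defs
  imports "HOL-Analysis.Analysis"
begin

definition C2 :: "('a::euclidean_space \<Rightarrow> real) \<Rightarrow> bool" where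
  "C2 f \<longleftrightarrow> (\<exists>Df D2f.
      (\<forall>x. (f has_derivative blinfun_apply (Df x)) (at x)) \<and>
      (\<forall>x. (Df has_derivative blinfun_apply (D2f x)) (at x)) \<and>
      continuous_on UNIV (D2f :: 'a \<Rightarrow> 'a \<Rightarrow>\<^sub>L ('a \<Rightarrow>\<^sub>L real)))"

definition saddle_point :: "('a::euclidean_space \<Rightarrow> real) \<Rightarrow> 'a \<Rightarrow> bool" where
  "saddle_point F x \<longleftrightarrow> (\<exists>DF (H :: 'a \<Rightarrow> ('a \<Rightarrow>\<^sub>L real)).
      (\<forall>y. (F has_derivative blinfun_apply (DF y)) (at y)) \<and>
      (DF has_derivative H) (at x) \<and>
      DF x = 0 \<and>
      \<not> (\<forall>v. blinfun_apply (H v) v \<ge> 0))"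

definition diag_prod :: "real ^ 'n ^ 'l \<Rightarrow> real ^ 'n" where
  "diag_prod w = (\<chi> m. \<Prod>i\<in>UNIV. w $ i $ m)"

end

(* Write g for diag_prod. At w every partial product of all but one factor still contains
   w_i or w_j, so g(w) = 0 and Dg(w) = 0; hence DF(w) = 0 and the second-order chain rule
   collapses the Hessian of F = f \<circ> g at w to v \<mapsto> Df(0) (D\<^sup>2g(w)[v,v]). In D\<^sup>2g(w)[v,v] only
   the pair {i, j} survives: its m-th entry is 2 v_i,m v_j,m \<Prod>_{l \<noteq> i,j} w_l,m, and these products
   are nonzero. So v can be chosen with D\<^sup>2g(w)[v,v] = -2 Df(0)z \<cdot> z for any z with Df(0) z \<noteq> 0,
   giving curvature -2 (Df(0) z)\<^sup>2 < 0. *)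

theory Submission
  imports Defs
begin

lemma has_derivative_comp_at_critical_point:
  fixes g :: "'a::real_normed_vector \<Rightarrow> 'b::real_normed_vector"
    and Df :: "'b \<Rightarrow> 'b \<Rightarrow>\<^sub>L 'c::real_normed_vector"
  assumes Df: "(Df has_derivative blinfun_apply D2f) (at (g w))"
    and g: "(g has_derivative blinfun_apply (Dg w)) (at w)"
    and Dg: "(Dg has_derivative DDg) (at w)"
    and crit: "Dg w = 0"
  shows "((\<lambda>y. Df (g y) o\<^sub>L Dg y) has_derivative (\<lambda>h. Df (g w) o\<^sub>L DDg h)) (at w)"
proof -
  have "((\<lambda>y. Df (g y)) has_derivative (\<lambda>h. D2f (Dg w h))) (at w)"
    by (rule has_derivative_compose[OF g Df])
  \<comment> \<open>the second product-rule term, D2f (Dg w h) \<circ> Dg w, vanishes because Dg w = 0\<close>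
  from bounded_bilinear.FDERIV[OF bounded_bilinear_blinfun_compose this Dg]
  show ?thesis by (simp add: crit)
qed

lemma saddle_point_comp:
  fixes f :: "'b::euclidean_space \<Rightarrow> real" and g :: "'a::euclidean_space \<Rightarrow> 'b"
  assumes Df: "\<And>x. (f has_derivative blinfun_apply (Df x)) (at x)"
    and D2f: "(Df has_derivative blinfun_apply D2f) (at (g w))"
    and Dg: "\<And>y. (g has_derivative blinfun_apply (Dg y)) (at y)"
    and DDg: "(Dg has_derivative DDg) (at w)"
    and crit: "Dg w = 0"
    and descent: "Df (g w) (DDg v v) < 0"
  shows "saddle_point (\<lambda>y. f (g y)) w"
  unfolding saddle_point_def
proof (intro exI conjI allI)
  show "((\<lambda>y. f (g y)) has_derivative blinfun_apply (Df (g y) o\<^sub>L Dg y)) (at y)" for y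
  proof -
    have "blinfun_apply (Df (g y) o\<^sub>L Dg y) = (\<lambda>h. Df (g y) (Dg y h))"
      by auto
    then show ?thesis
      using has_derivative_compose[OF Dg[of y] Df] by simp
  qed
  show "((\<lambda>y. Df (g y) o\<^sub>L Dg y) has_derivative (\<lambda>h. Df (g w) o\<^sub>L DDg h)) (at w)"
    by (rule has_derivative_comp_at_critical_point[OF D2f Dg DDg crit])
  show "Df (g w) o\<^sub>L Dg w = 0"
    by (simp add: crit)
  show "\<not> (\<forall>v. 0 \<le> (Df (g w) o\<^sub>L DDg v) v)"
    using descent by (auto simp: not_le)
qed

lemma prod_Diff_pair_two_zeros:
  fixes a :: "'l::finite \<Rightarrow> 'a::comm_semiring_1"
  assumes "i \<noteq> j" "a i = 0" "a j = 0" "k \<noteq> k'"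
  shows "(\<Prod>l\<in>UNIV - {k} - {k'}. a l) = (if {k, k'} = {i, j} then \<Prod>l\<in>UNIV - {i, j}. a l else 0)"
proof (cases "{k, k'} = {i, j}")
  case True
  then show ?thesis by (metis Diff_insert2 insert_commute)
next
  case False
  then have "\<exists>l\<in>UNIV - {k} - {k'}. a l = 0"
    using assms by auto
  then show ?thesis
    using False by (simp add: prod_zero)
qed

lemma sum_pairs_two_zeros:
  fixes a :: "'l::finite \<Rightarrow> 'a::comm_semiring_1"
  assumes "i \<noteq> j" "a i = 0" "a j = 0"
  shows "(\<Sum>k\<in>UNIV. \<Sum>k'\<in>UNIV - {k}. c k k' * (\<Prod>l\<in>UNIV - {k} - {k'}. a l))
    = (c i j + c j i) * (\<Prod>l\<in>UNIV - {i, j}. a l)"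
proof -
  let ?P = "\<Prod>l\<in>UNIV - {i, j}. a l"
  have inner: "(\<Sum>k'\<in>UNIV - {k}. c k k' * (\<Prod>l\<in>UNIV - {k} - {k'}. a l))
      = (if k = i then c i j * ?P else 0) + (if k = j then c j i * ?P else 0)" for k
  proof -
    have "(\<Sum>k'\<in>UNIV - {k}. c k k' * (\<Prod>l\<in>UNIV - {k} - {k'}. a l))
        = (\<Sum>k'\<in>UNIV - {k}. if {k, k'} = {i, j} then c k k' * ?P else 0)"
      using assms by (intro sum.cong) (auto simp: prod_Diff_pair_two_zeros)
    also have "\<dots> = (if k = i then c i j * ?P else 0) + (if k = j then c j i * ?P else 0)"
    proof -
      consider "k = i" | "k = j" | "k \<noteq> i" "k \<noteq> j" by blast
      then show ?thesis
      proof cases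
        case 1
        then have "{k, k'} = {i, j} \<longleftrightarrow> k' = j" for k'
          using assms(1) by (auto simp: doubleton_eq_iff)
        then show ?thesis using 1 assms(1) by (simp add: if_distrib)
      next
        case 2
        then have "{k, k'} = {i, j} \<longleftrightarrow> k' = i" for k'
          using assms(1) by (auto simp: doubleton_eq_iff)
        then show ?thesis using 2 assms(1) by (simp add: if_distrib)
      next
        case 3
        then have "{k, k'} \<noteq> {i, j}" for k' by (auto simp: doubleton_eq_iff)
        then show ?thesis using 3 by simp
      qed
    qed
    finally show ?thesis .
  qed
  show ?thesis
    unfolding inner by (simp add: sum.distrib distrib_right)
qed

lemma sum_scaleR_axis_nth: "(\<Sum>m\<in>UNIV. c m *\<^sub>R axis m (1::real)) $ k = c k"
  by (simp add: axis_def if_distrib cong: if_cong)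

definition entry_blinfun :: "'l::finite \<Rightarrow> 'n::finite \<Rightarrow> (real ^ 'n ^ 'l) \<Rightarrow>\<^sub>L (real ^ 'n)" where
  "entry_blinfun i m = Blinfun (\<lambda>h. h $ i $ m *\<^sub>R axis m 1)"

lemma entry_blinfun_apply: "entry_blinfun i m h = h $ i $ m *\<^sub>R axis m 1"
  for i :: "'l::finite" and m :: "'n::finite"
proof -
  have "bounded_linear (\<lambda>h::real ^ 'n ^ 'l. h $ i $ m)"
    by (intro bounded_linear_compose[OF bounded_linear_vec_nth] bounded_linear_vec_nth)
  then have "bounded_linear (\<lambda>h::real ^ 'n ^ 'l. h $ i $ m *\<^sub>R axis m (1::real))"
    by (rule bounded_linear_compose[OF bounded_linear_scaleR_left])
  then show ?thesis
    by (simp add: entry_blinfun_def bounded_linear_Blinfun_apply)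
qed

text \<open>The derivatives of diag_prod are written as combinations of the fixed maps
  entry_blinfun i m, so that derivatives of the coefficients give derivatives of the maps.\<close>

definition diag_prod_deriv :: "real ^ 'n::finite ^ 'l::finite \<Rightarrow> (real ^ 'n ^ 'l) \<Rightarrow>\<^sub>L (real ^ 'n)" where
  "diag_prod_deriv y = (\<Sum>m\<in>UNIV. \<Sum>i\<in>UNIV. (\<Prod>j\<in>UNIV - {i}. y $ j $ m) *\<^sub>R entry_blinfun i m)"

definition diag_prod_deriv2 ::
    "real ^ 'n::finite ^ 'l::finite \<Rightarrow> real ^ 'n ^ 'l \<Rightarrow> (real ^ 'n ^ 'l) \<Rightarrow>\<^sub>L (real ^ 'n)" where
  "diag_prod_deriv2 y h = (\<Sum>m\<in>UNIV. \<Sum>i\<in>UNIV.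
      (\<Sum>k\<in>UNIV - {i}. h $ k $ m * (\<Prod>j\<in>UNIV - {i} - {k}. y $ j $ m)) *\<^sub>R entry_blinfun i m)"

lemma diag_prod_deriv_apply:
  "diag_prod_deriv y h = (\<Sum>m\<in>UNIV. (\<Sum>i\<in>UNIV. h $ i $ m * (\<Prod>j\<in>UNIV - {i}. y $ j $ m)) *\<^sub>R axis m 1)"
  by (simp add: diag_prod_deriv_def blinfun.sum_left blinfun.scaleR_left entry_blinfun_apply
      scaleR_sum_left mult.commute)

lemma diag_prod_deriv2_apply_nth:
  "diag_prod_deriv2 y h v $ m
    = (\<Sum>i\<in>UNIV. \<Sum>k\<in>UNIV - {i}. (h $ k $ m * v $ i $ m) * (\<Prod>j\<in>UNIV - {i} - {k}. y $ j $ m))"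
proof -
  have "diag_prod_deriv2 y h v = (\<Sum>m\<in>UNIV. (\<Sum>i\<in>UNIV. \<Sum>k\<in>UNIV - {i}.
      (h $ k $ m * v $ i $ m) * (\<Prod>j\<in>UNIV - {i} - {k}. y $ j $ m)) *\<^sub>R axis m 1)"
    by (simp add: diag_prod_deriv2_def blinfun.sum_left blinfun.scaleR_left entry_blinfun_apply
        scaleR_sum_left sum_distrib_right mult_ac)
  then show ?thesis
    by (simp only: sum_scaleR_axis_nth)
qed

lemma has_derivative_vec_entry: "((\<lambda>y::real ^ 'n ^ 'l. y $ i $ m) has_derivative (\<lambda>h. h $ i $ m)) F"
  by (intro bounded_linear_imp_has_derivative bounded_linear_compose[OF bounded_linear_vec_nth]
      bounded_linear_vec_nth)

lemma has_derivative_diag_prod: "(diag_prod has_derivative diag_prod_deriv y) (at y)"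
proof -
  have diag_prod_eq: "diag_prod = (\<lambda>y. \<Sum>m\<in>UNIV. (\<Prod>i\<in>UNIV. y $ i $ m) *\<^sub>R axis m (1::real))"
    by (simp only: fun_eq_iff vec_eq_iff sum_scaleR_axis_nth) (simp add: diag_prod_def)
  show ?thesis
    unfolding diag_prod_eq diag_prod_deriv_apply[abs_def]
    by (intro has_derivative_sum has_derivative_scaleR_left has_derivative_prod
        has_derivative_vec_entry)
qed

lemma has_derivative_diag_prod_deriv: "(diag_prod_deriv has_derivative diag_prod_deriv2 y) (at y)"
  unfolding diag_prod_deriv_def[abs_def] diag_prod_deriv2_def[abs_def]
  by (intro has_derivative_sum has_derivative_scaleR_left has_derivative_prod has_derivative_vec_entry)

lemma diag_prod_eq_0: "y $ i = 0 \<Longrightarrow> diag_prod y = 0"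
  by (auto simp: diag_prod_def vec_eq_iff intro: prod_zero)

lemma diag_prod_deriv_eq_0:
  assumes "i \<noteq> j" "y $ i = 0" "y $ j = 0"
  shows "diag_prod_deriv y = 0"
proof -
  have partial_prod_eq_0: "(\<Prod>j\<in>UNIV - {k}. y $ j $ m) = 0" for k m
  proof -
    have "\<exists>l\<in>UNIV - {k}. y $ l = 0"
      using assms by (cases "k = i") auto
    then obtain l where "l \<in> UNIV - {k}" "y $ l = 0"
      by blast
    then show ?thesis
      by (intro prod_zero bexI[of _ l]) simp_all
  qed
  show ?thesis
    by (simp add: diag_prod_deriv_def partial_prod_eq_0)
qed

lemma diag_prod_deriv2_two_zeros:
  assumes "i \<noteq> j" "y $ i = 0" "y $ j = 0"
  shows "diag_prod_deriv2 y v v $ m = 2 * v $ i $ m * v $ j $ m * (\<Prod>l\<in>UNIV - {i, j}. y $ l $ m)"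
  using sum_pairs_two_zeros[of i j "\<lambda>l. y $ l $ m" "\<lambda>k k'. v $ k' $ m * v $ k $ m"] assms
  by (simp add: diag_prod_deriv2_apply_nth)

theorem theorem2:
  fixes f :: "real ^ 'n \<Rightarrow> real" and w :: "real ^ 'n ^ 'l::finite"
  assumes L2: "CARD('l) \<ge> 2"
    and f_C2: "C2 f"
    and grad0: "frechet_derivative f (at 0) \<noteq> (\<lambda>_. 0)"
    and inS: "\<exists>i j. i \<noteq> j \<and> w $ i = 0 \<and> w $ j = 0 \<and>
                (\<forall>k. k \<noteq> i \<and> k \<noteq> j \<longrightarrow> (\<forall>m. w $ k $ m \<noteq> 0))"
  shows "saddle_point (\<lambda>v. f (diag_prod v)) w"
proof -
  obtain Df D2f where Df: "\<And>x. (f has_derivative blinfun_apply (Df x)) (at x)"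
    and D2f: "\<And>x. (Df has_derivative blinfun_apply (D2f x)) (at x)"
    using f_C2 unfolding C2_def by blast
  obtain i j where ij: "i \<noteq> j" "w $ i = 0" "w $ j = 0"
    and nz: "\<And>k m. k \<noteq> i \<Longrightarrow> k \<noteq> j \<Longrightarrow> w $ k $ m \<noteq> 0"
    using inS by blast
  obtain z where z: "Df 0 z \<noteq> 0"
    using grad0 frechet_derivative_at[OF Df] by fastforce
  define P where "P m = (\<Prod>l\<in>UNIV - {i, j}. w $ l $ m)" for m
  have P_nz: "P m \<noteq> 0" for m
    unfolding P_def using nz by (auto simp: prod_zero_iff)
  define v :: "real ^ 'n ^ 'l" where
    "v = (\<chi> k. if k = i then (\<chi> m. z $ m / P m) else if k = j then vec (- Df 0 z) else 0)"
  have "diag_prod_deriv2 w v v = (- 2 * Df 0 z) *\<^sub>R z"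
    using ij P_nz by (simp add: vec_eq_iff diag_prod_deriv2_two_zeros v_def P_def[symmetric])
  then have "Df (diag_prod w) (diag_prod_deriv2 w v v) = - 2 * (Df 0 z)\<^sup>2"
    by (simp add: diag_prod_eq_0[OF ij(2)] blinfun.minus_right blinfun.scaleR_right power2_eq_square)
  with z have "Df (diag_prod w) (diag_prod_deriv2 w v v) < 0"
    by simp
  then show ?thesis
    by (rule saddle_point_comp[OF Df D2f has_derivative_diag_prod has_derivative_diag_prod_deriv
          diag_prod_deriv_eq_0[OF ij]])
qed

end
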